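(* Let $q\in\mathbb{C}$, $|q|<1$. For all $u,v\in\mathfrak{A}^0_{\mathrm{G}}$, $$\mathfrak{z}_q[u*_{\mathrm{G}}v]=\mathfrak{z}_q[u\sqcup\!\sqcup v]=\mathfrak{z}_q[u]\,\mathfrak{z}_q[v].$$
   Context: Let $Y_{\mathrm{G}}=\{z_{t,s}:t,s\in\mathbb{Z},\,0\le t\le s\}$ and $\mathfrak{A}_{\mathrm{G}}$ the free noncommutative $\mathbb{Q}$-algebra on $Y_{\mathrm{G}}$ (unit $\mathbf{1}$). $\mathfrak{A}^0_{\mathrm{G}}$ is the span of words $z_{t_1,s_1}\cdots z_{t_d,s_d}$ ($d\ge1$) with $t_1\ge1$. The stuffle $*_{\mathrm{G}}$ is bilinear with $\mathbf{1}*u=u*\mathbf{1}=u$ and $(z_{t,s}u)*(z_{t',s'}v)=z_{t,s}(u*z_{t',s'}v)+z_{t',s'}(z_{t,s}u*v)+z_{t+t',s+s'}(u*v)$. Map $\mathfrak{A}_{\mathrm{G}}$ into $\mathbb{Q}\langle\pi,y\rangle$ by the algebra homomorphism $z_{t,s}\mapsto\rho^t\pi^{s-t}y$, $\rho=\pi-\mathbf{1}$; elements of $\mathfrak{A}_{\mathrm{G}}$ are identified with their images. The shuffle $\sqcup\!\sqcup$ on $\mathbb{Q}\langle\pi,y\rangle$: bilinear, $\mathbf{1}\sqcup\!\sqcup u=u\sqcup\!\sqcup\mathbf{1}=u$, $(yu)\sqcup\!\sqcup v=u\sqcup\!\sqcup(yv)=y(u\sqcup\!\sqcup v)$, $\pi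 u\sqcup\!\sqcup\pi v=\pi(u\sqcup\!\sqcup\pi v)+\pi(\pi u\sqcup\!\sqcup v)-\pi(u\sqcup\!\sqcup v)$. Realization: let $\Phi$ be the algebra homomorphism from $\mathbb{Q}\langle\pi,y\rangle$ to operators on power series in $t$ with $\Phi(\pi)=\mathbf{P}$, $\mathbf{P}[f](t)=\sum_{k\ge0}f(q^kt)$, and $\Phi(y)=$ multiplication by $t/(1-t)$; for $W$ in the image of $\mathfrak{A}^0_{\mathrm{G}}$ set $\mathfrak{z}_q[W]=\Phi(W)[1]$ evaluated at $t=1$. (For a word, $\mathfrak{z}_q[z_{t_1,s_1}\cdots z_{t_d,s_d}]=\sum_{k_1>\dots>k_d>0}\prod_j q^{k_jt_j}(1-q^{k_j})^{-s_j}$.) *)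

theory Defs
  imports Complex_Main "HOL-Computational_Algebra.Formal_Power_Series"
begin

(* Formal Q-linear combinations of words, represented as lists of (word, coefficient). *)
type_synonym 'w fsum = "('w \<times> rat) list"

definition fscale :: "rat \<Rightarrow> 'w fsum \<Rightarrow> 'w fsum" where
  "fscale c U = map (\<lambda>(w, a). (w, c * a)) U"

definition fprefix :: "'l \<Rightarrow> 'l list fsum \<Rightarrow> 'l list fsum" where
  "fprefix x U = map (\<lambda>(w, a). (x # w, a)) U"

definition fmul :: "'l list fsum \<Rightarrow> 'l list fsum \<Rightarrow> 'l list fsum" where
  "fmul U V = concat (map (\<lambda>(w, a). map (\<lambda>(w', b). (w @ w', a * b)) V) U)"

primrec fpow :: "'l list fsum \<Rightarrow> nat \<Rightarrow> 'l list fsum" where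
  "fpow U 0 = [([], 1)]"
| "fpow U (Suc n) = fmul U (fpow U n)"

definition bilin :: "('v \<Rightarrow> 'v \<Rightarrow> 'w fsum) \<Rightarrow> 'v fsum \<Rightarrow> 'v fsum \<Rightarrow> 'w fsum" where
  "bilin f U V = concat (map (\<lambda>(w, a). concat (map (\<lambda>(w', b). fscale (a * b) (f w w')) V)) U)"

(* ---------- the algebra A_G : letters z_{t,s} encoded as pairs (t,s) ---------- *)
type_synonym zword = "(nat \<times> nat) list"

definition valid_zword :: "zword \<Rightarrow> bool" where
  "valid_zword w \<longleftrightarrow> (\<forall>(t, s) \<in> set w. t \<le> s)"

definition A0 :: "zword fsum set" where
  "A0 = {U. \<forall>(w, a) \<in> set U. valid_zword w \<and> w \<noteq> [] \<and> fst (hd w) \<ge> 1}"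

fun stuffle_w :: "zword \<Rightarrow> zword \<Rightarrow> zword fsum" where
  "stuffle_w [] v = [(v, 1)]"
| "stuffle_w u [] = [(u, 1)]"
| "stuffle_w (a # u) (b # v) =
     fprefix a (stuffle_w u (b # v)) @ fprefix b (stuffle_w (a # u) v)
     @ fprefix (fst a + fst b, snd a + snd b) (stuffle_w u v)"

definition stuffle :: "zword fsum \<Rightarrow> zword fsum \<Rightarrow> zword fsum" where
  "stuffle = bilin stuffle_w"

datatype pyl = Pi | Y

fun shuffle_w :: "pyl list \<Rightarrow> pyl list \<Rightarrow> pyl list fsum" where
  "shuffle_w [] v = [(v, 1)]"
| "shuffle_w u [] = [(u, 1)]"
| "shuffle_w (Y # u) v = fprefix Y (shuffle_w u v)"
| "shuffle_w (Pi # u) (Y # v) = fprefix Y (shuffle_w (Pi # u) v)"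
| "shuffle_w (Pi # u) (Pi # v) =
     fprefix Pi (shuffle_w u (Pi # v)) @ fprefix Pi (shuffle_w (Pi # u) v)
     @ fscale (-1) (fprefix Pi (shuffle_w u v))"

definition shuffle :: "pyl list fsum \<Rightarrow> pyl list fsum \<Rightarrow> pyl list fsum" where
  "shuffle = bilin shuffle_w"

definition rho :: "pyl list fsum" where
  "rho = [([Pi], 1), ([], -1)]"

definition img_letter :: "nat \<times> nat \<Rightarrow> pyl list fsum" where
  "img_letter ts = fmul (fpow rho (fst ts)) (fmul (fpow [([Pi], 1)] (snd ts - fst ts)) [([Y], 1)])"

definition img_word :: "zword \<Rightarrow> pyl list fsum" where
  "img_word w = foldr (\<lambda>l acc. fmul (img_letter l) acc) w [([], 1)]"

definition img :: "zword fsum \<Rightarrow> pyl list fsum" where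
  "img U = concat (map (\<lambda>(w, a). fscale a (img_word w)) U)"

(* P[f](t) = sum_k f(q^k t), acting on power series: t^n |-> t^n/(1-q^n) *)
definition Pop :: "complex \<Rightarrow> complex fps \<Rightarrow> complex fps" where
  "Pop q f = Abs_fps (\<lambda>n. fps_nth f n / (1 - q ^ n))"

definition Yop :: "complex fps \<Rightarrow> complex fps" where
  "Yop f = fps_X * inverse (1 - fps_X) * f"

primrec Phi_letter :: "complex \<Rightarrow> pyl \<Rightarrow> complex fps \<Rightarrow> complex fps" where
  "Phi_letter q Pi f = Pop q f"
| "Phi_letter q Y f = Yop f"

primrec Phi_word :: "complex \<Rightarrow> pyl list \<Rightarrow> complex fps \<Rightarrow> complex fps" where
  "Phi_word q [] f = f"
| "Phi_word q (x # w) f = Phi_letter q x (Phi_word q w f)"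

definition Phi_one :: "complex \<Rightarrow> pyl list fsum \<Rightarrow> complex fps" where
  "Phi_one q W = (\<Sum>(w, a) \<leftarrow> W. fps_const (of_rat a) * Phi_word q w 1)"

definition zq :: "complex \<Rightarrow> pyl list fsum \<Rightarrow> complex" where
  "zq q W = (\<Sum>n. fps_nth (Phi_one q W) n)"

end

(*
  The realization turns a word into an iterated nested sum: P divides the coefficient of t^n
  by 1 - q^n and y takes partial sums, so z_{t,s} acts on t^n, after a partial sum, by the
  weight (q^n/(1 - q^n))^t / (1 - q^n)^(s-t).  The shuffle of Q<pi, y> is built so that
  Phi(u shuffle v)[1] = Phi(u)[1] * Phi(v)[1] holds already for power series, the key point being
  the product rule of P on series vanishing at t = 0.  The stuffle instead is exactly the product
  of the sums truncated at k_1 < N, because the weights are multiplicative in (t, s).  For t_1 >= 1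
  the coefficients decay geometrically, so all series converge absolutely at t = 1, and both
  evaluations at t = 1 become products of limits (of partial sums, resp. of a Cauchy product).
*)

theory Submission
  imports Defs
begin

unbundle fps_syntax

section \<open>Linear evaluation of formal sums\<close>

definition fsum_eval :: "(rat \<Rightarrow> 'a::comm_ring_1) \<Rightarrow> ('w \<Rightarrow> 'a) \<Rightarrow> 'w fsum \<Rightarrow> 'a" where
  "fsum_eval h g X = (\<Sum>(w, a) \<leftarrow> X. h a * g w)"

lemma fsum_eval_Nil [simp]: "fsum_eval h g [] = 0"
  by (simp add: fsum_eval_def)

lemma fsum_eval_Cons [simp]: "fsum_eval h g ((w, a) # X) = h a * g w + fsum_eval h g X"
  by (simp add: fsum_eval_def)

lemma fsum_eval_append [simp]: "fsum_eval h g (X @ Z) = fsum_eval h g X + fsum_eval h g Z"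
  by (simp add: fsum_eval_def)

lemma fsum_eval_add: "fsum_eval h (\<lambda>w. g w + g' w) X = fsum_eval h g X + fsum_eval h g' X"
  by (induct X) (auto simp: algebra_simps)

lemma fsum_eval_zero [simp]: "fsum_eval h (\<lambda>w. 0) X = 0"
  by (induct X) auto

lemma fsum_eval_cmult: "fsum_eval h (\<lambda>w. c * g w) X = c * fsum_eval h g X"
  by (induct X) (auto simp: algebra_simps)

lemma fsum_eval_fprefix: "fsum_eval h g (fprefix x X) = fsum_eval h (\<lambda>w. g (x # w)) X"
  by (induct X) (auto simp: fprefix_def)

lemma fsum_eval_fscale:
  assumes "\<And>a b. h (a * b) = h a * h b"
  shows "fsum_eval h g (fscale c X) = h c * fsum_eval h g X"
  by (induct X) (auto simp: fscale_def assms algebra_simps)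

lemma fsum_eval_fmul:
  assumes h_mult: "\<And>a b. h (a * b) = h a * h b"
  shows "fsum_eval h g (fmul U V) = fsum_eval h (\<lambda>w. fsum_eval h (\<lambda>w'. g (w @ w')) V) U"
proof (induct U)
  case (Cons x U)
  obtain w a where x: "x = (w, a)" by fastforce
  have "fsum_eval h g (map (\<lambda>(w', b). (w @ w', a * b)) V) = h a * fsum_eval h (\<lambda>w'. g (w @ w')) V"
    by (induct V) (auto simp: h_mult algebra_simps)
  with Cons show ?case
    by (simp add: fmul_def x)
qed (simp add: fmul_def)

lemma fsum_eval_bilin:
  assumes h_mult: "\<And>a b. h (a * b) = h a * h b"
    and fg: "\<And>w a w' b. (w, a) \<in> set U \<Longrightarrow> (w', b) \<in> set V \<Longrightarrow> fsum_eval h k (f w w') = g w * g' w'"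
  shows "fsum_eval h k (bilin f U V) = fsum_eval h g U * fsum_eval h g' V"
proof -
  have row: "fsum_eval h k (concat (map (\<lambda>(w', b). fscale (a * b) (f w w')) V')) = h a * g w * fsum_eval h g' V'"
    if "\<And>w' b. (w', b) \<in> set V' \<Longrightarrow> fsum_eval h k (f w w') = g w * g' w'" for w a V'
    using that
  proof (induct V')
    case (Cons y V')
    obtain w' b where y: "y = (w', b)" by fastforce
    have "fsum_eval h k (f w w') = g w * g' w'"
      using Cons.prems[of w' b] y by simp
    moreover have "fsum_eval h k (concat (map (\<lambda>(w', b). fscale (a * b) (f w w')) V')) = h a * g w * fsum_eval h g' V'"
      using Cons.prems by (intro Cons.hyps) auto
    ultimately show ?case
      by (simp add: y fsum_eval_fscale h_mult algebra_simps)
  qed simp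
  show ?thesis
    using fg
  proof (induct U)
    case (Cons x U)
    obtain w a where x: "x = (w, a)" by fastforce
    have "fsum_eval h k (concat (map (\<lambda>(w', b). fscale (a * b) (f w w')) V)) = h a * g w * fsum_eval h g' V"
      using Cons.prems x by (intro row) auto
    moreover have "fsum_eval h k (bilin f U V) = fsum_eval h g U * fsum_eval h g' V"
      using Cons.prems by (intro Cons.hyps) auto
    ultimately show ?case
      by (simp add: bilin_def x algebra_simps)
  qed (simp add: bilin_def)
qed

section \<open>The realization as coefficient sequences\<close>

abbreviation fps_of_rat :: "rat \<Rightarrow> complex fps" where
  "fps_of_rat a \<equiv> fps_const (of_rat a)"

lemma fps_of_rat_mult: "fps_of_rat (a * b) = fps_of_rat a * fps_of_rat b"
  by (simp add: of_rat_mult flip: fps_const_mult)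

lemma Phi_letter_linear:
  "Phi_letter q x (f + g) = Phi_letter q x f + Phi_letter q x g"
  "Phi_letter q x (fps_const c * f) = fps_const c * Phi_letter q x f"
  "Phi_letter q x 0 = 0"
  by (cases x; simp add: Pop_def Yop_def fps_eq_iff add_divide_distrib algebra_simps)+

lemma Phi_letter_fsum_eval:
  "Phi_letter q x (fsum_eval fps_of_rat g W) = fsum_eval fps_of_rat (\<lambda>w. Phi_letter q x (g w)) W"
  by (induct W) (auto simp: Phi_letter_linear)

lemma Phi_word_append: "Phi_word q (w @ w') f = Phi_word q w (Phi_word q w' f)"
  by (induct w) auto

lemma Phi_word_fsum_eval:
  "Phi_word q v (fsum_eval fps_of_rat g W) = fsum_eval fps_of_rat (\<lambda>w. Phi_word q v (g w)) W"
  by (induct v) (auto simp: Phi_letter_fsum_eval)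

definition Phi_fsum :: "complex \<Rightarrow> pyl list fsum \<Rightarrow> complex fps \<Rightarrow> complex fps" where
  "Phi_fsum q W f = fsum_eval fps_of_rat (\<lambda>w. Phi_word q w f) W"

lemma Phi_one_eq_Phi_fsum: "Phi_one q W = Phi_fsum q W 1"
  by (simp add: Phi_one_def Phi_fsum_def fsum_eval_def)

lemma Phi_fsum_fprefix: "Phi_fsum q (fprefix x U) f = Phi_letter q x (Phi_fsum q U f)"
  by (simp add: Phi_fsum_def fsum_eval_fprefix Phi_letter_fsum_eval)

lemma Phi_fsum_Nil [simp]: "Phi_fsum q [] f = 0"
  and Phi_fsum_append [simp]: "Phi_fsum q (U @ V) f = Phi_fsum q U f + Phi_fsum q V f"
  by (simp_all add: Phi_fsum_def)

lemma Phi_fsum_letter: "Phi_fsum q [([Pi], 1)] = Pop q" "Phi_fsum q [([Y], 1)] = Yop"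
  by (simp_all add: Phi_fsum_def fun_eq_iff)

lemma Phi_fsum_fscale: "Phi_fsum q (fscale c U) f = fps_of_rat c * Phi_fsum q U f"
  by (simp add: Phi_fsum_def fsum_eval_fscale fps_of_rat_mult)

lemma Phi_fsum_fmul: "Phi_fsum q (fmul U V) f = Phi_fsum q U (Phi_fsum q V f)"
  by (simp add: Phi_fsum_def fsum_eval_fmul fps_of_rat_mult Phi_word_append Phi_word_fsum_eval)

lemma Phi_fsum_fpow: "Phi_fsum q (fpow U k) f = (Phi_fsum q U ^^ k) f"
  by (induct k) (simp_all add: Phi_fsum_fmul, simp add: Phi_fsum_def)

lemma Phi_fsum_rho: "Phi_fsum q rho f = Pop q f - f"
  by (simp add: Phi_fsum_def rho_def fps_eq_iff)

lemma Pop_funpow_nth: "(Pop q ^^ k) f $ n = f $ n / (1 - q ^ n) ^ k"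
  by (induct k) (auto simp: Pop_def)

lemma Pop_minus_id_funpow_nth: "((\<lambda>f. Pop q f - f) ^^ k) f $ n = f $ n * (1 / (1 - q ^ n) - 1) ^ k"
  by (induct k) (auto simp: Pop_def algebra_simps)

lemma Yop_nth: "Yop f $ n = (\<Sum>m<n. f $ m)"
proof -
  have "Yop f = fps_X * (f * Abs_fps (\<lambda>n. 1))"
    by (simp add: Yop_def fps_inverse_one_minus_fps_X mult.assoc mult.commute)
  moreover have "(f * Abs_fps (\<lambda>n. 1)) $ m = (\<Sum>i\<le>m. f $ i)" for m
    by (simp add: fps_mult_nth atLeast0AtMost sum.atMost_shift)
  ultimately show ?thesis
    by (cases n) (simp_all add: lessThan_Suc_atMost)
qed

text \<open>The eigenvalue of \<open>\<rho>\<^sup>t \<pi>\<^sup>s\<^sup>-\<^sup>t\<close> on \<open>t\<^sup>n\<close>, i.e.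
  \<open>(q\<^sup>n / (1 - q\<^sup>n))\<^sup>t / (1 - q\<^sup>n)\<^sup>s\<^sup>-\<^sup>t\<close>.\<close>

definition letter_weight :: "complex \<Rightarrow> nat \<Rightarrow> nat \<Rightarrow> nat \<Rightarrow> complex" where
  "letter_weight q t s n = (1 / (1 - q ^ n) - 1) ^ t / (1 - q ^ n) ^ (s - t)"

lemma Phi_fsum_img_letter_nth:
  "Phi_fsum q (img_letter (t, s)) f $ n = letter_weight q t s n * (\<Sum>m<n. f $ m)"
  by (simp add: img_letter_def Phi_fsum_fmul Phi_fsum_fpow Phi_fsum_rho[abs_def] Phi_fsum_letter
      Pop_funpow_nth Pop_minus_id_funpow_nth Yop_nth letter_weight_def)

primrec word_series :: "complex \<Rightarrow> zword \<Rightarrow> complex fps" where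
  "word_series q [] = 1"
| "word_series q (a # w) =
     Abs_fps (\<lambda>n. letter_weight q (fst a) (snd a) n * (\<Sum>m<n. word_series q w $ m))"

lemma Phi_fsum_img_word: "Phi_fsum q (img_word w) 1 = word_series q w"
proof (induct w)
  case (Cons a w)
  have "Phi_fsum q (img_word (a # w)) 1 = Phi_fsum q (img_letter a) (word_series q w)"
    by (simp add: img_word_def Phi_fsum_fmul flip: Cons)
  also have "\<dots> = word_series q (a # w)"
    by (cases a) (simp add: fps_eq_iff Phi_fsum_img_letter_nth)
  finally show ?case .
qed (simp add: img_word_def Phi_fsum_def)

lemma Phi_one_img: "Phi_one q (img U) = fsum_eval fps_of_rat (word_series q) U"
  unfolding Phi_one_eq_Phi_fsum
  by (induct U) (auto simp: img_def Phi_fsum_fscale Phi_fsum_img_word)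

section \<open>The shuffle\<close>

text \<open>Images of words of \<open>\<AA>\<^sub>G\<close> end in \<open>y\<close>, so after a leading \<open>\<pi>\<close> there is a nonempty
  word, whose series vanishes at \<open>t = 0\<close> as \<open>Pop_mult\<close> requires.\<close>

definition ends_with_Y :: "pyl list \<Rightarrow> bool" where
  "ends_with_Y w \<longleftrightarrow> w = [] \<or> last w = Y"

lemma ends_with_Y_append: "ends_with_Y u \<Longrightarrow> ends_with_Y v \<Longrightarrow> ends_with_Y (u @ v)"
  by (auto simp: ends_with_Y_def last_append)

lemma ends_with_Y_Cons: "ends_with_Y (x # w) \<Longrightarrow> ends_with_Y w"
  by (cases w) (auto simp: ends_with_Y_def)

lemma ends_with_Y_Pi_Cons: "ends_with_Y (Pi # w) \<Longrightarrow> w \<noteq> []"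
  by (auto simp: ends_with_Y_def)

lemma words_fmul:
  "(w, c) \<in> set (fmul U V) \<Longrightarrow> \<exists>u a v b. (u, a) \<in> set U \<and> (v, b) \<in> set V \<and> w = u @ v"
  unfolding fmul_def by auto

lemma img_word_ends_with_Y: "(w, c) \<in> set (img_word v) \<Longrightarrow> ends_with_Y w"
proof (induct v arbitrary: w c)
  case (Cons l v)
  have letter: "ends_with_Y w'" if "(w', c') \<in> set (img_letter l)" for w' c'
    using that unfolding img_letter_def
    by (auto dest!: words_fmul simp: ends_with_Y_def)
  from Cons.prems obtain u a v' b where "(u, a) \<in> set (img_letter l)" "(v', b) \<in> set (img_word v)" "w = u @ v'"
    by (auto simp: img_word_def dest!: words_fmul)
  then show ?case
    using letter Cons.hyps by (blast intro: ends_with_Y_append)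
qed (simp add: img_word_def ends_with_Y_def)

lemma img_ends_with_Y: "(w, c) \<in> set (img U) \<Longrightarrow> ends_with_Y w"
  unfolding img_def fscale_def using img_word_ends_with_Y by auto

lemma Phi_word_nth_0: "w \<noteq> [] \<Longrightarrow> Phi_word q w f $ 0 = 0"
  by (cases w; cases "hd w") (auto simp: Pop_def Yop_nth)

text \<open>On coefficients this is the identity
  \<open>1/((1-x)(1-y)) = (1/(1-y) + 1/(1-x) - 1)/(1-xy)\<close> with \<open>x = q\<^sup>i\<close>, \<open>y = q\<^sup>n\<^sup>-\<^sup>i\<close>;
  the terms \<open>i = 0\<close> and \<open>i = n\<close>, where it fails, are killed by \<open>f $ 0 = g $ 0 = 0\<close>.\<close>

lemma Pop_mult:
  assumes q: "\<And>n. n > 0 \<Longrightarrow> q ^ n \<noteq> 1" and f0: "f $ 0 = 0" and g0: "g $ 0 = 0"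
  shows "Pop q f * Pop q g = Pop q (f * Pop q g) + Pop q (Pop q f * g) - Pop q (f * g)"
proof (rule fps_ext)
  fix n
  have term_eq: "(f $ i * (g $ (n - i) / (1 - q ^ (n - i))) + f $ i / (1 - q ^ i) * g $ (n - i)
           - f $ i * g $ (n - i)) / (1 - q ^ n) = (f $ i / (1 - q ^ i)) * (g $ (n - i) / (1 - q ^ (n - i)))"
    if i: "i \<le> n" for i
  proof (cases "i = 0 \<or> i = n")
    case True
    then show ?thesis using f0 g0 by auto
  next
    case False
    then have "1 - q ^ i \<noteq> 0" "1 - q ^ (n - i) \<noteq> 0" "1 - q ^ i * q ^ (n - i) \<noteq> 0"
      using i q[of i] q[of "n - i"] q[of n] by (auto simp flip: power_add)
    moreover have "q ^ n = q ^ i * q ^ (n - i)"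
      using i by (simp flip: power_add)
    ultimately show ?thesis
      by (simp add: divide_simps) (simp add: algebra_simps)
  qed
  have "(Pop q (f * Pop q g) + Pop q (Pop q f * g) - Pop q (f * g)) $ n
      = (\<Sum>i=0..n. f $ i * (g $ (n - i) / (1 - q ^ (n - i))) + f $ i / (1 - q ^ i) * g $ (n - i)
           - f $ i * g $ (n - i)) / (1 - q ^ n)"
    by (simp add: Pop_def fps_mult_nth sum.distrib sum_subtractf diff_divide_distrib add_divide_distrib)
  also have "\<dots> = (\<Sum>i=0..n. (f $ i / (1 - q ^ i)) * (g $ (n - i) / (1 - q ^ (n - i))))"
    unfolding sum_divide_distrib by (rule sum.cong[OF refl], rule term_eq) simp
  also have "\<dots> = (Pop q f * Pop q g) $ n"
    by (simp add: Pop_def fps_mult_nth)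
  finally show "(Pop q f * Pop q g) $ n = (Pop q (f * Pop q g) + Pop q (Pop q f * g) - Pop q (f * g)) $ n"
    by simp
qed

lemma Phi_one_shuffle_w:
  assumes q: "\<And>n. n > 0 \<Longrightarrow> q ^ n \<noteq> 1"
  shows "ends_with_Y u \<Longrightarrow> ends_with_Y v \<Longrightarrow> Phi_one q (shuffle_w u v) = Phi_word q u 1 * Phi_word q v 1"
proof (induct u v rule: shuffle_w.induct)
  case (3 u v)
  then show ?case
    by (simp add: Phi_one_eq_Phi_fsum Phi_fsum_fprefix Yop_def mult.assoc ends_with_Y_Cons)
next
  case (4 u v)
  then show ?case
    by (simp add: Phi_one_eq_Phi_fsum Phi_fsum_fprefix Yop_def algebra_simps ends_with_Y_Cons)
next
  case (5 u v)
  have "Phi_one q (shuffle_w (Pi # u) (Pi # v))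
      = Pop q (Phi_word q u 1 * Pop q (Phi_word q v 1)) + Pop q (Pop q (Phi_word q u 1) * Phi_word q v 1)
        - Pop q (Phi_word q u 1 * Phi_word q v 1)"
    using 5 by (simp add: Phi_one_eq_Phi_fsum Phi_fsum_fprefix Phi_fsum_fscale ends_with_Y_Cons
        flip: fps_const_neg)
  also have "\<dots> = Pop q (Phi_word q u 1) * Pop q (Phi_word q v 1)"
    using 5 by (simp add: Pop_mult q Phi_word_nth_0 ends_with_Y_Pi_Cons)
  finally show ?case by simp
qed (simp_all add: Phi_one_eq_Phi_fsum Phi_fsum_def)

lemma Phi_one_shuffle:
  assumes q: "\<And>n. n > 0 \<Longrightarrow> q ^ n \<noteq> 1"
    and "\<And>w a. (w, a) \<in> set U \<Longrightarrow> ends_with_Y w" "\<And>w a. (w, a) \<in> set V \<Longrightarrow> ends_with_Y w"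
  shows "Phi_one q (shuffle U V) = Phi_one q U * Phi_one q V"
  using assms unfolding Phi_one_eq_Phi_fsum Phi_fsum_def shuffle_def
  by (intro fsum_eval_bilin fps_of_rat_mult) (simp add: Phi_one_shuffle_w[unfolded Phi_one_eq_Phi_fsum Phi_fsum_def])

section \<open>The stuffle\<close>

definition word_partial_sum :: "complex \<Rightarrow> zword \<Rightarrow> nat \<Rightarrow> complex" where
  "word_partial_sum q w N = (\<Sum>n<N. word_series q w $ n)"

lemma word_partial_sum_0 [simp]: "word_partial_sum q w 0 = 0"
  by (simp add: word_partial_sum_def)

lemma word_partial_sum_Nil_Suc [simp]: "word_partial_sum q [] (Suc N) = 1"
  by (simp add: word_partial_sum_def lessThan_Suc_atMost sum.atMost_shift)

lemma word_partial_sum_Cons_Suc: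
  "word_partial_sum q (a # w) (Suc N)
     = word_partial_sum q (a # w) N + letter_weight q (fst a) (snd a) N * word_partial_sum q w N"
  by (simp add: word_partial_sum_def)

lemma letter_weight_add:
  assumes "t \<le> s" "t' \<le> s'"
  shows "letter_weight q (t + t') (s + s') n = letter_weight q t s n * letter_weight q t' s' n"
proof -
  have "s + s' - (t + t') = (s - t) + (s' - t')"
    using assms by simp
  then show ?thesis
    by (simp add: letter_weight_def power_add)
qed

lemma valid_zword_Cons [simp]: "valid_zword (a # w) \<longleftrightarrow> fst a \<le> snd a \<and> valid_zword w"
  by (cases a) (simp add: valid_zword_def)

text \<open>The stuffle is the product of the truncated nested sums: splitting off the largest
  index \<open>N\<close> of \<open>k\<^sub>1 > \<dots> > k\<^sub>d\<close> in both factors gives the three terms of the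
  recursion of \<open>*\<^sub>G\<close>, the third one because \<open>letter_weight\<close> is multiplicative.\<close>

lemma word_partial_sum_stuffle_w:
  assumes "valid_zword u" "valid_zword v"
  shows "word_partial_sum q u N * word_partial_sum q v N
           = fsum_eval of_rat (\<lambda>w. word_partial_sum q w N) (stuffle_w u v)"
  using assms
proof (induct N arbitrary: u v)
  case (Suc N)
  let ?S = "\<lambda>N X. fsum_eval of_rat (\<lambda>w. word_partial_sum q w N) X"
  have prefix: "?S (Suc N) (fprefix a X) = ?S N (fprefix a X) + letter_weight q (fst a) (snd a) N * ?S N X"
    for a X by (simp add: fsum_eval_fprefix word_partial_sum_Cons_Suc fsum_eval_add fsum_eval_cmult)
  show ?case
  proof (cases u; cases v)
    fix a u' b v'
    assume u: "u = a # u'" and v: "v = b # v'"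
    let ?la = "letter_weight q (fst a) (snd a) N" and ?lb = "letter_weight q (fst b) (snd b) N"
    have "?S (Suc N) (stuffle_w u v)
        = ?S N (stuffle_w u v) + ?la * ?S N (stuffle_w u' v) + ?lb * ?S N (stuffle_w u v')
          + letter_weight q (fst a + fst b) (snd a + snd b) N * ?S N (stuffle_w u' v')"
      by (simp add: u v prefix algebra_simps)
    also have "\<dots> = word_partial_sum q u N * word_partial_sum q v N
          + ?la * (word_partial_sum q u' N * word_partial_sum q v N)
          + ?lb * (word_partial_sum q u N * word_partial_sum q v' N)
          + (?la * ?lb) * (word_partial_sum q u' N * word_partial_sum q v' N)"
      using Suc by (simp add: u v letter_weight_add)
    also have "\<dots> = word_partial_sum q u (Suc N) * word_partial_sum q v (Suc N)"
      by (simp add: u v word_partial_sum_Cons_Suc algebra_simps)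
    finally show ?thesis by simp
  qed simp_all
qed simp

lemma fsum_partial_sum_stuffle:
  assumes "\<And>w a. (w, a) \<in> set U \<Longrightarrow> valid_zword w" "\<And>w a. (w, a) \<in> set V \<Longrightarrow> valid_zword w"
  shows "fsum_eval of_rat (\<lambda>w. word_partial_sum q w N) (stuffle U V)
           = fsum_eval of_rat (\<lambda>w. word_partial_sum q w N) U * fsum_eval of_rat (\<lambda>w. word_partial_sum q w N) V"
  unfolding stuffle_def using assms
  by (intro fsum_eval_bilin of_rat_mult) (simp add: word_partial_sum_stuffle_w)

section \<open>Convergence at \<open>t = 1\<close>\<close>

lemma fps_nth_fsum_eval: "fsum_eval fps_of_rat g X $ n = fsum_eval of_rat (\<lambda>w. g w $ n) X"
  by (induct X) auto

lemma sum_Phi_one_img: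
  "(\<Sum>n<N. Phi_one q (img U) $ n) = fsum_eval of_rat (\<lambda>w. word_partial_sum q w N) U"
  unfolding Phi_one_img fps_nth_fsum_eval
  by (induct U) (auto simp: sum.distrib word_partial_sum_def sum_distrib_left)

lemma summable_real_power_mult_geometric:
  fixes r :: real
  assumes "0 \<le> r" "r < 1"
  shows "summable (\<lambda>n. real n ^ k * r ^ n)"
  using assms
proof (induct k arbitrary: r)
  case (Suc k)
  define s where "s = sqrt r"
  have s: "0 \<le> s" "s < 1" "r = s * s"
    using Suc.prems by (auto simp: s_def)
  have "(\<lambda>n. real n * s ^ n) \<longlonglongrightarrow> 0"
    using powser_times_n_limit_0[of s] s by simp
  then have "eventually (\<lambda>n. real n * s ^ n < 1) sequentially"
    by (rule order_tendstoD) simp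
  then have "eventually (\<lambda>n. norm (real n ^ Suc k * r ^ n) \<le> real n ^ k * s ^ n) sequentially"
  proof eventually_elim
    case (elim n)
    have "norm (real n ^ Suc k * r ^ n) = (real n * s ^ n) * (real n ^ k * s ^ n)"
      using s by (simp add: abs_mult power_mult_distrib)
    also have "\<dots> \<le> real n ^ k * s ^ n"
      using elim s by (intro mult_left_le_one_le) auto
    finally show ?case .
  qed
  then show ?case
    using Suc.hyps[OF s(1,2)] by (rule summable_comparison_test_ev)
qed simp

lemma power_neq_one_if_norm_less_one:
  fixes q :: "'a::real_normed_div_algebra"
  assumes "norm q < 1" "n > 0"
  shows "q ^ n \<noteq> 1"
proof -
  have "norm (q ^ n) < 1"
    using assms by (simp add: norm_power power_less_one_iff)
  then show ?thesis
    by auto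
qed

lemma norm_inverse_one_minus_power_le:
  fixes q :: complex
  assumes q: "norm q < 1" and n: "n \<ge> 1"
  shows "norm (1 / (1 - q ^ n)) \<le> 1 / (1 - norm q)"
proof -
  have "norm q ^ n \<le> norm q"
    using q n power_decreasing[of 1 n "norm q"] by simp
  moreover have "1 - norm (q ^ n) \<le> norm (1 - q ^ n)"
    using norm_triangle_ineq2[of 1 "q ^ n"] by simp
  ultimately have "1 - norm q \<le> norm (1 - q ^ n)"
    by (simp add: norm_power)
  then show ?thesis
    using q by (simp add: norm_divide frac_le)
qed

lemma norm_letter_weight_le:
  assumes q: "norm q < 1" and n: "n \<ge> 1"
  shows "norm (letter_weight q t s n) \<le> (1 / (1 - norm q)) ^ (t + (s - t)) * norm q ^ (n * t)"
proof -
  define K where "K = 1 / (1 - norm q)"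
  have inv: "norm (1 / (1 - q ^ n)) \<le> K"
    unfolding K_def by (rule norm_inverse_one_minus_power_le[OF q n])
  have "q ^ n \<noteq> 1"
    using power_neq_one_if_norm_less_one[OF q] n by simp
  then have "1 / (1 - q ^ n) - 1 = q ^ n * (1 / (1 - q ^ n))"
    by (simp add: field_simps)
  then have "norm (letter_weight q t s n) = (norm q ^ n * norm (1 / (1 - q ^ n))) ^ t * norm (1 / (1 - q ^ n)) ^ (s - t)"
    by (simp add: letter_weight_def norm_mult norm_power norm_divide power_divide)
  also have "\<dots> \<le> (norm q ^ n * K) ^ t * K ^ (s - t)"
    using inv order_trans[OF norm_ge_zero inv] by (intro mult_mono power_mono mult_left_mono) auto
  also have "\<dots> = K ^ (t + (s - t)) * norm q ^ (n * t)"
    by (simp add: power_mult_distrib power_add power_mult)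
  finally show ?thesis
    unfolding K_def .
qed

lemma norm_word_series_Cons_le:
  assumes q: "norm q < 1" and M: "0 \<le> M" and bound: "\<And>m. norm (word_series q w $ m) \<le> M * real m ^ length w"
  shows "norm (word_series q (a # w) $ n)
           \<le> (1 / (1 - norm q)) ^ (fst a + (snd a - fst a)) * norm q ^ (n * fst a) * (M * real n ^ Suc (length w))"
proof (cases "n = 0")
  case False
  have "norm (\<Sum>m<n. word_series q w $ m) \<le> (\<Sum>m<n. M * real n ^ length w)"
    using bound M by (intro sum_norm_le order_trans[OF bound] mult_left_mono power_mono) auto
  then have sum_le: "norm (\<Sum>m<n. word_series q w $ m) \<le> M * real n ^ Suc (length w)"
    by (simp add: mult_ac)
  have weight_le: "norm (letter_weight q (fst a) (snd a) n)
      \<le> (1 / (1 - norm q)) ^ (fst a + (snd a - fst a)) * norm q ^ (n * fst a)"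
    using norm_letter_weight_le[OF q] False by simp
  have "0 \<le> (1 / (1 - norm q)) ^ (fst a + (snd a - fst a)) * norm q ^ (n * fst a)"
    using q by simp
  then show ?thesis
    using mult_mono[OF weight_le sum_le _ norm_ge_zero] by (simp add: norm_mult)
qed simp

lemma word_series_poly_bound:
  assumes q: "norm q < 1"
  shows "\<exists>M\<ge>0. \<forall>n. norm (word_series q w $ n) \<le> M * real n ^ length w"
proof (induct w)
  case Nil
  show ?case by (intro exI[of _ 1]) (simp add: fps_one_nth)
next
  case (Cons a w)
  then obtain M where M: "0 \<le> M" "\<And>n. norm (word_series q w $ n) \<le> M * real n ^ length w"
    by blast
  let ?C = "(1 / (1 - norm q)) ^ (fst a + (snd a - fst a))"
  have "norm (word_series q (a # w) $ n) \<le> ?C * M * real n ^ length (a # w)" for n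
  proof -
    have "norm q ^ (n * fst a) \<le> 1"
      using q by (simp add: power_le_one)
    then have "?C * norm q ^ (n * fst a) * (M * real n ^ Suc (length w)) \<le> ?C * 1 * (M * real n ^ Suc (length w))"
      using q M by (intro mult_right_mono mult_left_mono) auto
    then show ?thesis
      using norm_word_series_Cons_le[OF q M(1) M(2), of a n] by (simp add: mult.assoc)
  qed
  moreover have "0 \<le> ?C * M"
    using q M by simp
  ultimately show ?case by blast
qed

lemma summable_norm_word_series:
  assumes q: "norm q < 1" and a: "fst a \<ge> 1"
  shows "summable (\<lambda>n. norm (word_series q (a # w) $ n))"
proof -
  obtain M where M: "0 \<le> M" "\<And>n. norm (word_series q w $ n) \<le> M * real n ^ length w"
    using word_series_poly_bound[OF q] by blast
  let ?C = "(1 / (1 - norm q)) ^ (fst a + (snd a - fst a))"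
  show ?thesis
  proof (rule summable_comparison_test')
    show "summable (\<lambda>n. ?C * M * (real n ^ Suc (length w) * norm q ^ n))"
      using q by (intro summable_mult summable_real_power_mult_geometric) auto
  next
    fix n
    have "norm q ^ (n * fst a) \<le> norm q ^ n"
      using q a by (intro power_decreasing) auto
    then have "?C * norm q ^ (n * fst a) * (M * real n ^ Suc (length w)) \<le> ?C * norm q ^ n * (M * real n ^ Suc (length w))"
      using q M by (intro mult_right_mono mult_left_mono) auto
    then have "norm (word_series q (a # w) $ n) \<le> ?C * norm q ^ n * (M * real n ^ Suc (length w))"
      by (rule order_trans[OF norm_word_series_Cons_le[OF q M]])
    then show "norm (norm (word_series q (a # w) $ n)) \<le> ?C * M * (real n ^ Suc (length w) * norm q ^ n)"
      by (simp add: mult_ac)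
  qed
qed

lemma summable_norm_Phi_one_img:
  assumes q: "norm q < 1" and U: "\<And>w a. (w, a) \<in> set U \<Longrightarrow> w \<noteq> [] \<and> fst (hd w) \<ge> 1"
  shows "summable (\<lambda>n. norm (Phi_one q (img U) $ n))"
  using U unfolding Phi_one_img fps_nth_fsum_eval
proof (induct U)
  case (Cons x U)
  obtain w c where x: "x = (w, c)" by fastforce
  with Cons.prems obtain a w' where w: "w = a # w'" "fst a \<ge> 1"
    by (cases w) fastforce+
  have "summable (\<lambda>n. norm (of_rat c :: complex) * norm (word_series q w $ n))"
    using summable_norm_word_series[OF q w(2)] w(1) by (intro summable_mult) auto
  moreover have "summable (\<lambda>n. norm (fsum_eval of_rat (\<lambda>w. word_series q w $ n) U))"
    using Cons.prems by (intro Cons.hyps) auto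
  ultimately show ?case
    by (rule summable_comparison_test'[OF summable_add]) (simp add: x norm_triangle_le norm_mult)
qed simp

section \<open>The double shuffle relation\<close>

lemma A0_memberD:
  "U \<in> A0 \<Longrightarrow> (w, a) \<in> set U \<Longrightarrow> valid_zword w \<and> w \<noteq> [] \<and> fst (hd w) \<ge> 1"
  unfolding A0_def by fast

lemma zq_img_stuffle:
  assumes q: "norm q < 1" and "u \<in> A0" "v \<in> A0"
  shows "zq q (img (stuffle u v)) = zq q (img u) * zq q (img v)"
proof -
  note valid = A0_memberD[OF assms(2), THEN conjunct1] A0_memberD[OF assms(3), THEN conjunct1]
  note head = A0_memberD[OF assms(2), THEN conjunct2] A0_memberD[OF assms(3), THEN conjunct2]
  have "(\<lambda>N. \<Sum>n<N. Phi_one q (img (stuffle u v)) $ n)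
      = (\<lambda>N. (\<Sum>n<N. Phi_one q (img u) $ n) * (\<Sum>n<N. Phi_one q (img v) $ n))"
    by (simp add: sum_Phi_one_img fsum_partial_sum_stuffle valid)
  moreover have "\<dots> \<longlonglongrightarrow> zq q (img u) * zq q (img v)"
    unfolding zq_def
    using summable_norm_Phi_one_img[OF q head(1), THEN summable_norm_cancel]
      summable_norm_Phi_one_img[OF q head(2), THEN summable_norm_cancel]
    by (intro tendsto_mult summable_LIMSEQ)
  ultimately have "(\<lambda>n. Phi_one q (img (stuffle u v)) $ n) sums (zq q (img u) * zq q (img v))"
    unfolding sums_def by simp
  then show ?thesis
    unfolding zq_def by (rule sums_unique[symmetric])
qed

lemma zq_shuffle_img:
  assumes q: "norm q < 1" and "u \<in> A0" "v \<in> A0"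
  shows "zq q (shuffle (img u) (img v)) = zq q (img u) * zq q (img v)"
proof -
  note head = A0_memberD[OF assms(2), THEN conjunct2] A0_memberD[OF assms(3), THEN conjunct2]
  have "Phi_one q (shuffle (img u) (img v)) = Phi_one q (img u) * Phi_one q (img v)"
    using power_neq_one_if_norm_less_one[OF q] by (intro Phi_one_shuffle img_ends_with_Y)
  then have "(\<lambda>n. Phi_one q (shuffle (img u) (img v)) $ n)
      = (\<lambda>n. \<Sum>i\<le>n. Phi_one q (img u) $ i * Phi_one q (img v) $ (n - i))"
    by (simp add: fps_mult_nth atLeast0AtMost)
  moreover have "(\<lambda>n. \<Sum>i\<le>n. Phi_one q (img u) $ i * Phi_one q (img v) $ (n - i))
      sums (zq q (img u) * zq q (img v))"
    unfolding zq_def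
    using Cauchy_product_sums[OF summable_norm_Phi_one_img[OF q head(1)] summable_norm_Phi_one_img[OF q head(2)]]
    by simp
  ultimately show ?thesis
    unfolding zq_def by (simp add: sums_iff)
qed

theorem theorem9p2:
  fixes q :: complex and u v :: "zword fsum"
  assumes "norm q < 1" and "u \<in> A0" and "v \<in> A0"
  shows "zq q (img (stuffle u v)) = zq q (shuffle (img u) (img v))
       \<and> zq q (shuffle (img u) (img v)) = zq q (img u) * zq q (img v)"
  using zq_img_stuffle[OF assms] zq_shuffle_img[OF assms] by simp

end
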